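(* Let $\Omega\subset\mathbb{R}^2$ be open and $u\in C^4(\Omega)$, $Q=\sqrt{1+|\nabla u|^2}$, $H=\operatorname{div}(\nabla u/Q)$. Then $$\operatorname{div}\Big(\frac1Q\Big(I-\frac{\nabla u\otimes\nabla u}{Q^2}\Big)\nabla(QH)-\frac{H^2}{2Q}\nabla u\Big)=\Delta^2u-D_ib_1^i[u]-D^2_{ij}b_2^{ij}[u]\quad\text{in }\Omega,$$ where, for suitable fixed contractions with universal constant coefficients (independent of $u$ and $\Omega$), $$b_1[u]=D^2u\star D^2u\star\sum_{k=1}^3Q^{-2k-1}P_{2k-1}(\nabla u),\qquad b_2[u]=D^2u\star\sum_{k=1}^2Q^{-2k-1}P_{2k}(\nabla u)+D^2u\star P_2(\nabla u)\star\big(Q(1+Q)\big)^{-1}.$$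
   Context: Summation convention over repeated indices. The symbol $\star$ denotes a linear combination with constant real coefficients of contractions of the tensors involved (e.g. $|\nabla u|^2=\nabla u\star\nabla u$), and $P_\ell(\nabla u)=\nabla u\star\cdots\star\nabla u$ with $\ell$ factors. The left-hand side is the graphical Willmore operator $\Delta_{\Gamma(u)}H+\tfrac12H^3-2H\mathcal K$ written in divergence form. *)

theory Defs
  imports "HOL-Analysis.Analysis"
begin

definition pd :: "2 \<Rightarrow> (real^2 \<Rightarrow> real) \<Rightarrow> real^2 \<Rightarrow> real" where
  "pd i f x = deriv (\<lambda>t. f (x + t *\<^sub>R axis i 1)) 0"

fun Ck :: "nat \<Rightarrow> (real^2) set \<Rightarrow> (real^2 \<Rightarrow> real) \<Rightarrow> bool" where
  "Ck 0 \<Omega> f = continuous_on \<Omega> f"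
| "Ck (Suc k) \<Omega> f = (continuous_on \<Omega> f \<and>
      (\<forall>i. \<forall>x\<in>\<Omega>. (\<lambda>t. f (x + t *\<^sub>R axis i 1)) differentiable (at 0)) \<and>
      (\<forall>i. Ck k \<Omega> (pd i f)))"

definition idx_lists :: "nat \<Rightarrow> 2 list set" where
  "idx_lists m = {js. length js = m}"

text \<open>Perfect matchings of the slots 0..m-1, as fixed-point-free involutions.\<close>
definition pairings :: "nat \<Rightarrow> (nat \<Rightarrow> nat) set" where
  "pairings m = {\<sigma>. (\<forall>p<m. \<sigma> p < m \<and> \<sigma> (\<sigma> p) = p \<and> \<sigma> p \<noteq> p) \<and> (\<forall>p\<ge>m. \<sigma> p = p)}"

text \<open>Coefficient tensors of a linear combination (constant real coefficients) of
  full contractions: span of products of Kronecker deltas over perfect matchings of the slots.\<close>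
definition contraction_tensor :: "nat \<Rightarrow> (2 list \<Rightarrow> real) \<Rightarrow> bool" where
  "contraction_tensor m T \<longleftrightarrow> (\<exists>c. \<forall>js\<in>idx_lists m.
     T js = (\<Sum>\<sigma>\<in>pairings m. c \<sigma> * (if \<forall>p<m. js ! p = js ! (\<sigma> p) then 1 else 0)))"

definition Qf :: "(real^2 \<Rightarrow> real) \<Rightarrow> real^2 \<Rightarrow> real" where
  "Qf u x = sqrt (1 + (\<Sum>i\<in>UNIV. (pd i u x)\<^sup>2))"

definition Hf :: "(real^2 \<Rightarrow> real) \<Rightarrow> real^2 \<Rightarrow> real" where
  "Hf u x = (\<Sum>i\<in>UNIV. pd i (\<lambda>y. pd i u y / Qf u y) x)"

definition willmore_lhs :: "(real^2 \<Rightarrow> real) \<Rightarrow> real^2 \<Rightarrow> real" where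
  "willmore_lhs u x = (\<Sum>j\<in>UNIV. pd j (\<lambda>y.
      (\<Sum>l\<in>UNIV. (1 / Qf u y) * ((if j = l then 1 else 0) - pd j u y * pd l u y / (Qf u y)\<^sup>2)
                   * pd l (\<lambda>z. Qf u z * Hf u z) y)
      - (Hf u y)\<^sup>2 / (2 * Qf u y) * pd j u y) x)"

definition bilap :: "(real^2 \<Rightarrow> real) \<Rightarrow> real^2 \<Rightarrow> real" where
  "bilap u x = (\<Sum>i\<in>UNIV. \<Sum>j\<in>UNIV. pd i (pd i (pd j (pd j u))) x)"

definition b1 :: "(nat \<Rightarrow> 2 list \<Rightarrow> real) \<Rightarrow> (real^2 \<Rightarrow> real) \<Rightarrow> real^2 \<Rightarrow> 2 \<Rightarrow> real" where
  "b1 T1 u x i = (\<Sum>k\<in>{1,2,3::nat}.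
     (\<Sum>js\<in>idx_lists (4 + (2*k - 1)). T1 k (i # js)
        * pd (js!0) (pd (js!1) u) x * pd (js!2) (pd (js!3) u) x
        * (\<Prod>p<2*k - 1. pd (js!(4+p)) u x)) / (Qf u x) ^ (2*k + 1))"

definition b2 :: "(nat \<Rightarrow> 2 list \<Rightarrow> real) \<Rightarrow> (2 list \<Rightarrow> real) \<Rightarrow> (real^2 \<Rightarrow> real) \<Rightarrow> real^2 \<Rightarrow> 2 \<Rightarrow> 2 \<Rightarrow> real" where
  "b2 T2 T3 u x i j =
     (\<Sum>k\<in>{1,2::nat}.
        (\<Sum>js\<in>idx_lists (2 + 2*k). T2 k (i # j # js)
           * pd (js!0) (pd (js!1) u) x * (\<Prod>p<2*k. pd (js!(2+p)) u x)) / (Qf u x) ^ (2*k + 1))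
   + (\<Sum>js\<in>idx_lists 4. T3 (i # j # js)
        * pd (js!0) (pd (js!1) u) x * pd (js!2) u x * pd (js!3) u x) / (Qf u x * (1 + Qf u x))"

end

(*
  Let A = (1/Q)(I - Du (x) Du / Q^2) be the matrix on the left-hand side. The mean curvature
  expands as QH = Delta u - D^2u(Du, Du) / Q^2, and the product rule
    A_im D_m(QH) = D_m(A_im QH) - (D_m A_im) QH
  writes the vector field under the outer divergence as D_i Delta u - b1_i - D_m b2_im, where
    b2_im = delta_im Delta u - A_im QH,    b1_i = (D_m A_im) QH + H^2/(2Q) D_i u.
  Expanding A, QH and D_m A_im in powers of 1/Q turns these into contractions of D^2u with
  polynomials in Du. The only part that is not polynomial in 1/Q is
  delta_im Delta u (1 - 1/Q) = delta_im Delta u |Du|^2 / (Q(1 + Q)), the last summand of b2.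
*)

theory Submission
  imports Defs
begin

section \<open>Partial derivatives along coordinate axes\<close>

definition pdiff_on :: "(real^2) set \<Rightarrow> (real^2 \<Rightarrow> real) \<Rightarrow> bool" where
  "pdiff_on S f \<longleftrightarrow> (\<forall>y\<in>S. \<forall>i. (\<lambda>t. f (y + t *\<^sub>R axis i 1)) differentiable (at 0))"

lemma pdiff_onD:
  "pdiff_on S f \<Longrightarrow> y \<in> S \<Longrightarrow> ((\<lambda>t. f (y + t *\<^sub>R axis i 1)) has_real_derivative pd i f y) (at 0)"
  unfolding pdiff_on_def pd_def using DERIV_deriv_iff_real_differentiable by blast

lemma pdiff_onI:
  "(\<And>y i. y \<in> S \<Longrightarrow> ((\<lambda>t. f (y + t *\<^sub>R axis i 1)) has_real_derivative D y i) (at 0)) \<Longrightarrow> pdiff_on S f"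
  unfolding pdiff_on_def real_differentiable_def by blast

lemma pd_eqI: "((\<lambda>t. f (y + t *\<^sub>R axis i 1)) has_real_derivative D) (at 0) \<Longrightarrow> pd i f y = D"
  unfolding pd_def by (rule DERIV_imp_deriv)

lemma pdiff_on_const: "pdiff_on S (\<lambda>y. c)"
  by (rule pdiff_onI) (rule DERIV_const)

lemma pd_const: "pd i (\<lambda>y. c) y = 0"
  by (rule pd_eqI) simp

lemma pdiff_on_add: "pdiff_on S f \<Longrightarrow> pdiff_on S g \<Longrightarrow> pdiff_on S (\<lambda>y. f y + g y)"
  by (rule pdiff_onI) (rule DERIV_add; erule pdiff_onD)

lemma pd_add: "pdiff_on S f \<Longrightarrow> pdiff_on S g \<Longrightarrow> y \<in> S \<Longrightarrow> pd i (\<lambda>y. f y + g y) y = pd i f y + pd i g y"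
  by (rule pd_eqI) (rule DERIV_add; erule pdiff_onD)

lemma pdiff_on_diff: "pdiff_on S f \<Longrightarrow> pdiff_on S g \<Longrightarrow> pdiff_on S (\<lambda>y. f y - g y)"
  by (rule pdiff_onI) (rule DERIV_diff; erule pdiff_onD)

lemma pd_diff: "pdiff_on S f \<Longrightarrow> pdiff_on S g \<Longrightarrow> y \<in> S \<Longrightarrow> pd i (\<lambda>y. f y - g y) y = pd i f y - pd i g y"
  by (rule pd_eqI) (rule DERIV_diff; erule pdiff_onD)

lemma pdiff_on_mult: "pdiff_on S f \<Longrightarrow> pdiff_on S g \<Longrightarrow> pdiff_on S (\<lambda>y. f y * g y)"
  by (rule pdiff_onI) (rule DERIV_mult; erule pdiff_onD)

lemma pd_mult:
  "pdiff_on S f \<Longrightarrow> pdiff_on S g \<Longrightarrow> y \<in> S \<Longrightarrow> pd i (\<lambda>y. f y * g y) y = pd i f y * g y + f y * pd i g y"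
  by (rule pd_eqI) (auto intro: DERIV_mult'[THEN DERIV_cong] pdiff_onD)

lemma pdiff_on_divide:
  "pdiff_on S f \<Longrightarrow> pdiff_on S g \<Longrightarrow> (\<And>z. z \<in> S \<Longrightarrow> g z \<noteq> 0) \<Longrightarrow> pdiff_on S (\<lambda>y. f y / g y)"
  by (rule pdiff_onI) (rule DERIV_divide; auto intro: pdiff_onD)

lemma pd_divide:
  "pdiff_on S f \<Longrightarrow> pdiff_on S g \<Longrightarrow> g y \<noteq> 0 \<Longrightarrow> y \<in> S \<Longrightarrow>
   pd i (\<lambda>y. f y / g y) y = (pd i f y * g y - f y * pd i g y) / (g y)\<^sup>2"
  by (rule pd_eqI) (auto intro: DERIV_divide[THEN DERIV_cong] pdiff_onD simp: power2_eq_square)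

lemma pdiff_on_power: "pdiff_on S f \<Longrightarrow> pdiff_on S (\<lambda>y. f y ^ n)"
  by (rule pdiff_onI) (rule DERIV_power; erule pdiff_onD)

lemma pd_power: "pdiff_on S f \<Longrightarrow> y \<in> S \<Longrightarrow> pd i (\<lambda>y. f y ^ n) y = of_nat n * pd i f y * f y ^ (n - 1)"
  by (rule pd_eqI) (auto intro: DERIV_power[THEN DERIV_cong] pdiff_onD)

lemma has_real_derivative_sqrt_along_axis:
  assumes "pdiff_on S f" "f y > 0" "y \<in> S"
  shows "((\<lambda>t. sqrt (f (y + t *\<^sub>R axis i 1))) has_real_derivative pd i f y / (2 * sqrt (f y))) (at 0)"
proof -
  have "(sqrt has_real_derivative inverse (sqrt (f y)) / 2) (at (f (y + 0 *\<^sub>R axis i 1)))"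
    using DERIV_real_sqrt assms(2,3) by simp
  from DERIV_chain2[OF this pdiff_onD[OF assms(1,3)]] show ?thesis
    by (simp add: divide_simps mult.commute)
qed

lemma pdiff_on_sqrt: "pdiff_on S f \<Longrightarrow> (\<And>z. z \<in> S \<Longrightarrow> f z > 0) \<Longrightarrow> pdiff_on S (\<lambda>y. sqrt (f y))"
  by (rule pdiff_onI) (rule has_real_derivative_sqrt_along_axis)

lemma pd_sqrt:
  "pdiff_on S f \<Longrightarrow> f y > 0 \<Longrightarrow> y \<in> S \<Longrightarrow>
   pd i (\<lambda>y. sqrt (f y)) y = pd i f y / (2 * sqrt (f y))"
  by (rule pd_eqI) (rule has_real_derivative_sqrt_along_axis)

lemma pdiff_on_sum: "finite A \<Longrightarrow> (\<And>a. a \<in> A \<Longrightarrow> pdiff_on S (f a)) \<Longrightarrow> pdiff_on S (\<lambda>y. \<Sum>a\<in>A. f a y)"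
  by (rule pdiff_onI) (rule DERIV_sum; auto intro: pdiff_onD)

lemma pd_sum:
  "finite A \<Longrightarrow> (\<And>a. a \<in> A \<Longrightarrow> pdiff_on S (f a)) \<Longrightarrow> y \<in> S \<Longrightarrow>
   pd i (\<lambda>y. \<Sum>a\<in>A. f a y) y = (\<Sum>a\<in>A. pd i (f a) y)"
  by (rule pd_eqI) (rule DERIV_sum; auto intro: pdiff_onD)

lemmas pdiff_on_intros = pdiff_on_const pdiff_on_add pdiff_on_diff pdiff_on_mult pdiff_on_divide
  pdiff_on_power pdiff_on_sqrt pdiff_on_sum

lemmas pd_rules = pd_add pd_diff pd_mult pd_divide pd_power pd_sqrt pd_sum

lemma eventually_axis_line_in_open:
  fixes S :: "(real^2) set"
  assumes "open S" "y \<in> S"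
  shows "eventually (\<lambda>t::real. y + t *\<^sub>R axis i 1 \<in> S) (nhds 0)"
proof -
  have "((\<lambda>t::real. y + t *\<^sub>R axis i 1) \<longlongrightarrow> y + 0 *\<^sub>R axis i 1) (nhds 0)"
    by (intro tendsto_intros filterlim_ident)
  then show ?thesis
    using assms by (simp add: tendsto_def)
qed

lemma eventually_axis_line_eq:
  fixes S :: "(real^2) set"
  assumes "open S" "y \<in> S" "\<And>z. z \<in> S \<Longrightarrow> f z = g z"
  shows "eventually (\<lambda>t::real. f (y + t *\<^sub>R axis i 1) = g (y + t *\<^sub>R axis i 1)) (nhds 0)"
  using eventually_axis_line_in_open[OF assms(1,2)] by eventually_elim (rule assms(3))

lemma pd_cong:
  fixes S :: "(real^2) set"
  assumes "open S" "y \<in> S" "\<And>z. z \<in> S \<Longrightarrow> f z = g z"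
  shows "pd i f y = pd i g y"
  unfolding pd_def by (rule deriv_cong_ev[OF eventually_axis_line_eq[OF assms] refl])

lemma pdiff_on_cong:
  fixes S :: "(real^2) set"
  assumes "open S" "\<And>z. z \<in> S \<Longrightarrow> f z = g z" "pdiff_on S g"
  shows "pdiff_on S f"
proof (rule pdiff_onI)
  fix y i assume "y \<in> S"
  show "((\<lambda>t. f (y + t *\<^sub>R axis i 1)) has_real_derivative pd i g y) (at 0)"
    using pdiff_onD[OF assms(3) \<open>y \<in> S\<close>]
    by (subst DERIV_cong_ev[OF refl eventually_axis_line_eq[OF assms(1) \<open>y \<in> S\<close> assms(2)] refl])
qed

definition pdiff2_on :: "(real^2) set \<Rightarrow> (real^2 \<Rightarrow> real) \<Rightarrow> bool" where
  "pdiff2_on S f \<longleftrightarrow> pdiff_on S f \<and> (\<forall>i. pdiff_on S (pd i f))"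

lemma pdiff2_on_imp_pdiff_on: "pdiff2_on S f \<Longrightarrow> pdiff_on S f"
  and pdiff2_on_imp_pdiff_on_pd: "pdiff2_on S f \<Longrightarrow> pdiff_on S (pd i f)"
  unfolding pdiff2_on_def by blast+

lemma pdiff2_onI:
  fixes S :: "(real^2) set"
  assumes "open S" "pdiff_on S f" "\<And>i y. y \<in> S \<Longrightarrow> pd i f y = g i y" "\<And>i. pdiff_on S (g i)"
  shows "pdiff2_on S f"
  unfolding pdiff2_on_def using pdiff_on_cong[OF assms(1,3,4)] assms(2) by blast

lemma pdiff2_on_cong:
  fixes S :: "(real^2) set"
  assumes "open S" "\<And>z. z \<in> S \<Longrightarrow> f z = g z" "pdiff2_on S g"
  shows "pdiff2_on S f"
  using assms pdiff_on_cong[OF assms(1,2)] pd_cong[OF assms(1) _ assms(2)]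
  by (intro pdiff2_onI[where g="\<lambda>i. pd i g"]) (auto simp: pdiff2_on_def)

lemma pdiff2_on_const: "pdiff2_on S (\<lambda>y. c)"
  by (simp add: pdiff2_on_def pdiff_on_def pd_const)

context
  fixes S :: "(real^2) set"
  assumes "open S"
begin

lemma pdiff2_on_add: "pdiff2_on S f \<Longrightarrow> pdiff2_on S g \<Longrightarrow> pdiff2_on S (\<lambda>y. f y + g y)"
  by (rule pdiff2_onI[OF \<open>open S\<close>, where g="\<lambda>i y. pd i f y + pd i g y"])
    (auto simp: pdiff2_on_def intro!: pdiff_on_intros pd_add)

lemma pdiff2_on_diff: "pdiff2_on S f \<Longrightarrow> pdiff2_on S g \<Longrightarrow> pdiff2_on S (\<lambda>y. f y - g y)"
  by (rule pdiff2_onI[OF \<open>open S\<close>, where g="\<lambda>i y. pd i f y - pd i g y"])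
    (auto simp: pdiff2_on_def intro!: pdiff_on_intros pd_diff)

lemma pdiff2_on_mult: "pdiff2_on S f \<Longrightarrow> pdiff2_on S g \<Longrightarrow> pdiff2_on S (\<lambda>y. f y * g y)"
  by (rule pdiff2_onI[OF \<open>open S\<close>, where g="\<lambda>i y. pd i f y * g y + f y * pd i g y"])
    (auto simp: pdiff2_on_def intro!: pdiff_on_intros pd_mult)

lemma pdiff2_on_divide:
  "pdiff2_on S f \<Longrightarrow> pdiff2_on S g \<Longrightarrow> (\<And>z. z \<in> S \<Longrightarrow> g z \<noteq> 0) \<Longrightarrow> pdiff2_on S (\<lambda>y. f y / g y)"
  by (rule pdiff2_onI[OF \<open>open S\<close>, where g="\<lambda>i y. (pd i f y * g y - f y * pd i g y) / (g y)\<^sup>2"])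
    (auto simp: pdiff2_on_def intro!: pdiff_on_intros pd_divide)

lemma pdiff2_on_power: "pdiff2_on S f \<Longrightarrow> pdiff2_on S (\<lambda>y. f y ^ n)"
  by (rule pdiff2_onI[OF \<open>open S\<close>, where g="\<lambda>i y. of_nat n * pd i f y * f y ^ (n - 1)"])
    (use pd_power in \<open>auto simp: pdiff2_on_def intro!: pdiff_on_intros\<close>)

lemma pdiff2_on_sqrt:
  "pdiff2_on S f \<Longrightarrow> (\<And>z. z \<in> S \<Longrightarrow> f z > 0) \<Longrightarrow> pdiff2_on S (\<lambda>y. sqrt (f y))"
  by (rule pdiff2_onI[OF \<open>open S\<close>, where g="\<lambda>i y. pd i f y / (2 * sqrt (f y))"])
    (auto simp: pdiff2_on_def intro!: pdiff_on_intros pd_sqrt less_imp_neq[symmetric])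

lemma pdiff2_on_sum:
  "finite A \<Longrightarrow> (\<And>a. a \<in> A \<Longrightarrow> pdiff2_on S (f a)) \<Longrightarrow> pdiff2_on S (\<lambda>y. \<Sum>a\<in>A. f a y)"
  by (rule pdiff2_onI[OF \<open>open S\<close>, where g="\<lambda>i y. \<Sum>a\<in>A. pd i (f a) y"])
    (auto simp: pdiff2_on_def intro!: pdiff_on_intros pd_sum)

end

section \<open>Contraction tensors given by lists of pairings\<close>

fun pairing_of :: "(nat \<times> nat) list \<Rightarrow> nat \<Rightarrow> nat" where
  "pairing_of [] p = p"
| "pairing_of ((a, b) # ps) p = (if p = a then b else if p = b then a else pairing_of ps p)"

(* One (coefficient, pairing) entry per term; a pairing is listed by its pairs of slots. *)
definition pairing_tensor :: "nat \<Rightarrow> (real \<times> (nat \<times> nat) list) list \<Rightarrow> 2 list \<Rightarrow> real" where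
  "pairing_tensor m cs js =
     (\<Sum>(c, ps)\<leftarrow>cs. c * (if \<forall>p<m. js ! p = js ! (pairing_of ps p) then 1 else 0))"

lemma finite_pairings: "finite (pairings m)"
proof (rule finite_subset[OF _ finite_permutations[of "{..<m}"]])
  show "pairings m \<subseteq> {\<sigma>. \<sigma> permutes {..<m}}"
  proof safe
    fix \<sigma> assume \<sigma>: "\<sigma> \<in> pairings m"
    then have "\<sigma> (\<sigma> p) = p" for p
      by (cases "p < m") (auto simp: pairings_def)
    then have "bij \<sigma>"
      by (rule involuntory_imp_bij)
    with \<sigma> show "\<sigma> permutes {..<m}"
      by (auto simp: permutes_def pairings_def bij_iff)
  qed
qed simp

lemma sum_pairings_collect:
  fixes cs :: "('a::semiring_0 \<times> (nat \<times> nat) list) list"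
  assumes "\<forall>(c, ps)\<in>set cs. pairing_of ps \<in> pairings m"
  shows "(\<Sum>\<sigma>\<in>pairings m. (\<Sum>(c, ps)\<leftarrow>cs. if pairing_of ps = \<sigma> then c else 0) * X \<sigma>)
       = (\<Sum>(c, ps)\<leftarrow>cs. c * X (pairing_of ps))"
  using assms
proof (induction cs)
  case (Cons cp cs)
  obtain c ps where cp: "cp = (c, ps)" by fastforce
  have "(\<Sum>\<sigma>\<in>pairings m. (if pairing_of ps = \<sigma> then c else 0) * X \<sigma>) = c * X (pairing_of ps)"
    using Cons.prems by (simp add: cp finite_pairings if_distrib[of "\<lambda>a. a * _"] cong: if_cong)
  with Cons show ?case
    by (simp add: cp distrib_right sum.distrib)
qed simp

lemma contraction_tensor_pairing_tensor:
  assumes "\<forall>(c, ps)\<in>set cs. pairing_of ps \<in> pairings m"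
  shows "contraction_tensor m (pairing_tensor m cs)"
  unfolding contraction_tensor_def pairing_tensor_def
  by (intro exI[of _ "\<lambda>\<sigma>. \<Sum>(c, ps)\<leftarrow>cs. if pairing_of ps = \<sigma> then c else 0"] ballI)
    (simp add: sum_pairings_collect[OF assms])

section \<open>The coefficient tensors\<close>

lemma index_2_induct: "P 1 \<Longrightarrow> P 2 \<Longrightarrow> P (i::2)"
  using exhaust_2[of i] by blast

lemma idx_lists_0: "idx_lists 0 = {[]}"
  by (auto simp: idx_lists_def)

lemma sum_idx_lists_Suc: "sum f (idx_lists (Suc n)) = (\<Sum>a\<in>UNIV. \<Sum>js\<in>idx_lists n. f (a # js))"
proof -
  have "idx_lists (Suc n) = (\<lambda>(a, js). a # js) ` (UNIV \<times> idx_lists n)"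
    by (auto simp: idx_lists_def image_iff length_Suc_conv)
  moreover have "inj_on (\<lambda>(a, js). a # js) (UNIV \<times> idx_lists n)"
    by (auto simp: inj_on_def)
  ultimately have "sum f (idx_lists (Suc n)) = (\<Sum>(a, js)\<in>UNIV \<times> idx_lists n. f (a # js))"
    by (simp only: sum.reindex comp_def case_prod_unfold)
  then show ?thesis
    by (simp add: sum.cartesian_product)
qed

definition lap :: "(real^2 \<Rightarrow> real) \<Rightarrow> real^2 \<Rightarrow> real" where
  "lap u y = (\<Sum>a\<in>UNIV. pd a (pd a u) y)"

definition hess_grad_grad :: "(real^2 \<Rightarrow> real) \<Rightarrow> real^2 \<Rightarrow> real" where
  "hess_grad_grad u y = (\<Sum>a\<in>UNIV. \<Sum>b\<in>UNIV. pd a (pd b u) y * pd a u y * pd b u y)"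

(*
  Slot 0 (slots 0 and 1 for willmore_T2 and willmore_T3) carries the free indices; then come the
  two indices of each Hessian factor and one index per gradient factor, in the order of b1, b2.
*)
definition willmore_T1 :: "nat \<Rightarrow> 2 list \<Rightarrow> real" where
  "willmore_T1 k =
     (if k = 1 then pairing_tensor 6
        [(-1, [(0,1),(2,5),(3,4)]), (-1, [(0,2),(1,5),(3,4)]), (-1/2, [(0,5),(1,2),(3,4)])]
      else if k = 2 then pairing_tensor 8
        [(3, [(1,2),(3,5),(4,6),(0,7)]), (1, [(0,1),(2,5),(3,6),(4,7)]), (1, [(0,2),(1,5),(3,6),(4,7)])]
      else pairing_tensor 10 [(-5/2, [(1,5),(2,6),(3,7),(4,8),(0,9)])])"

definition willmore_T2 :: "nat \<Rightarrow> 2 list \<Rightarrow> real" where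
  "willmore_T2 k =
     (if k = 1 then pairing_tensor 6 [(1, [(0,1),(2,4),(3,5)]), (1, [(0,4),(1,5),(2,3)])]
      else pairing_tensor 8 [(-1, [(0,6),(1,7),(2,4),(3,5)])])"

definition willmore_T3 :: "2 list \<Rightarrow> real" where
  "willmore_T3 = pairing_tensor 6 [(1, [(0,1),(2,3),(4,5)])]"

lemma contraction_tensor_willmore:
  "(\<forall>k\<in>{1,2,3::nat}. contraction_tensor (2*k + 4) (willmore_T1 k)) \<and>
   (\<forall>k\<in>{1,2::nat}. contraction_tensor (2*k + 4) (willmore_T2 k)) \<and>
   contraction_tensor 6 willmore_T3"
  unfolding willmore_T1_def willmore_T2_def willmore_T3_def
  by (simp add: contraction_tensor_pairing_tensor pairings_def numeral_eq_Suc All_less_Suc)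

lemmas tensor_eval_simps = pairing_tensor_def sum_idx_lists_Suc idx_lists_0 numeral_eq_Suc
  All_less_Suc sum_2

lemma b1_willmore_T1:
  "b1 willmore_T1 u y i =
     - ((\<Sum>k\<in>UNIV. pd k u y * (pd i (pd k u) y + pd k (pd i u) y)) * lap u y
        + pd i u y * (lap u y)\<^sup>2 / 2) / Qf u y ^ 3
   + ((\<Sum>k\<in>UNIV. pd k u y * (pd i (pd k u) y + pd k (pd i u) y)) * hess_grad_grad u y
        + 3 * pd i u y * lap u y * hess_grad_grad u y) / Qf u y ^ 5
   - 5 / 2 * pd i u y * (hess_grad_grad u y)\<^sup>2 / Qf u y ^ 7"
proof -
  note defs = willmore_T1_def lap_def hess_grad_grad_def
  have "(\<Sum>js\<in>idx_lists 5. willmore_T1 1 (i # js) * pd (js!0) (pd (js!1) u) y * pd (js!2) (pd (js!3) u) y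
          * (\<Prod>p<1. pd (js!(4+p)) u y))
      = - ((\<Sum>k\<in>UNIV. pd k u y * (pd i (pd k u) y + pd k (pd i u) y)) * lap u y
        + pd i u y * (lap u y)\<^sup>2 / 2)"
    unfolding defs by (induction i rule: index_2_induct) (simp add: tensor_eval_simps; algebra)+
  moreover have "(\<Sum>js\<in>idx_lists 7. willmore_T1 2 (i # js) * pd (js!0) (pd (js!1) u) y
          * pd (js!2) (pd (js!3) u) y * (\<Prod>p<3. pd (js!(4+p)) u y))
      = (\<Sum>k\<in>UNIV. pd k u y * (pd i (pd k u) y + pd k (pd i u) y)) * hess_grad_grad u y
        + 3 * pd i u y * lap u y * hess_grad_grad u y"
    unfolding defs by (induction i rule: index_2_induct) (simp add: tensor_eval_simps; algebra)+
  moreover have "(\<Sum>js\<in>idx_lists 9. willmore_T1 3 (i # js) * pd (js!0) (pd (js!1) u) y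
          * pd (js!2) (pd (js!3) u) y * (\<Prod>p<5. pd (js!(4+p)) u y))
      = - 5 / 2 * pd i u y * (hess_grad_grad u y)\<^sup>2"
    unfolding defs by (induction i rule: index_2_induct) (simp add: tensor_eval_simps; algebra)+
  ultimately show ?thesis
    by (simp add: b1_def flip: power_Suc)
qed

lemma b2_willmore_T2_T3:
  "b2 willmore_T2 willmore_T3 u y i j =
     ((if i = j then hess_grad_grad u y else 0) + pd i u y * pd j u y * lap u y) / Qf u y ^ 3
   - pd i u y * pd j u y * hess_grad_grad u y / Qf u y ^ 5
   + (if i = j then lap u y * (\<Sum>a\<in>UNIV. (pd a u y)\<^sup>2) else 0) / (Qf u y * (1 + Qf u y))"
proof -
  note defs = willmore_T2_def willmore_T3_def lap_def hess_grad_grad_def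
  have "(\<Sum>js\<in>idx_lists 4. willmore_T2 1 (i # j # js) * pd (js!0) (pd (js!1) u) y
          * (\<Prod>p<2. pd (js!(2+p)) u y))
      = (if i = j then hess_grad_grad u y else 0) + pd i u y * pd j u y * lap u y"
    unfolding defs by (induction i rule: index_2_induct; induction j rule: index_2_induct)
      (simp add: tensor_eval_simps; algebra)+
  moreover have "(\<Sum>js\<in>idx_lists 6. willmore_T2 2 (i # j # js) * pd (js!0) (pd (js!1) u) y
          * (\<Prod>p<4. pd (js!(2+p)) u y))
      = - pd i u y * pd j u y * hess_grad_grad u y"
    unfolding defs by (induction i rule: index_2_induct; induction j rule: index_2_induct)
      (simp add: tensor_eval_simps; algebra)+
  moreover have "(\<Sum>js\<in>idx_lists 4. willmore_T3 (i # j # js) * pd (js!0) (pd (js!1) u) y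
          * pd (js!2) u y * pd (js!3) u y)
      = (if i = j then lap u y * (\<Sum>a\<in>UNIV. (pd a u y)\<^sup>2) else 0)"
    unfolding defs by (induction i rule: index_2_induct; induction j rule: index_2_induct)
      (simp add: tensor_eval_simps; algebra)+
  ultimately show ?thesis
    by (simp add: b2_def flip: power_Suc)
qed

section \<open>The divergence identity\<close>

lemma Qf_pos: "Qf u y > 0"
  unfolding Qf_def by (simp add: add_pos_nonneg sum_nonneg)

lemma Qf_nonzero: "Qf u y \<noteq> 0"
  using Qf_pos[of u y] by simp

lemma Qf_squared: "(Qf u y)\<^sup>2 = 1 + (\<Sum>i\<in>UNIV. (pd i u y)\<^sup>2)"
  unfolding Qf_def by (simp add: add_nonneg_nonneg sum_nonneg)

definition willmore_matrix :: "(real^2 \<Rightarrow> real) \<Rightarrow> 2 \<Rightarrow> 2 \<Rightarrow> real^2 \<Rightarrow> real" where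
  "willmore_matrix u i l y = 1 / Qf u y * ((if i = l then 1 else 0) - pd i u y * pd l u y / (Qf u y)\<^sup>2)"

definition b1_unexpanded :: "(real^2 \<Rightarrow> real) \<Rightarrow> 2 \<Rightarrow> real^2 \<Rightarrow> real" where
  "b1_unexpanded u i y = (\<Sum>m\<in>UNIV. pd m (willmore_matrix u i m) y) * (Qf u y * Hf u y)
     + (Hf u y)\<^sup>2 / (2 * Qf u y) * pd i u y"

definition b2_unexpanded :: "(real^2 \<Rightarrow> real) \<Rightarrow> 2 \<Rightarrow> 2 \<Rightarrow> real^2 \<Rightarrow> real" where
  "b2_unexpanded u i m y = (if i = m then 1 else 0) * lap u y - willmore_matrix u i m y * (Qf u y * Hf u y)"

locale pdiff4_on =
  fixes \<Omega> :: "(real^2) set" and u :: "real^2 \<Rightarrow> real"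
  assumes open_domain: "open \<Omega>"
    and pdiff_on_u: "pdiff_on \<Omega> u"
    and pdiff_on_pd1: "\<And>a. pdiff_on \<Omega> (pd a u)"
    and pdiff_on_pd2: "\<And>a b. pdiff_on \<Omega> (pd a (pd b u))"
    and pdiff_on_pd3: "\<And>a b c. pdiff_on \<Omega> (pd a (pd b (pd c u)))"
begin

lemmas pd_rules_on = pd_const pd_rules[where S=\<Omega>]

lemmas pdiff_intros = pdiff_on_intros pdiff_on_u pdiff_on_pd1 pdiff_on_pd2 pdiff_on_pd3

lemmas pdiff2_intros = pdiff2_on_const pdiff2_on_add[OF open_domain] pdiff2_on_diff[OF open_domain]
  pdiff2_on_mult[OF open_domain] pdiff2_on_divide[OF open_domain] pdiff2_on_power[OF open_domain]
  pdiff2_on_sqrt[OF open_domain] pdiff2_on_sum[OF open_domain]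

lemma pdiff2_on_pd1: "pdiff2_on \<Omega> (pd a u)"
  and pdiff2_on_pd2: "pdiff2_on \<Omega> (pd a (pd b u))"
  by (simp_all add: pdiff2_on_def pdiff_on_pd1 pdiff_on_pd2 pdiff_on_pd3)

lemma pdiff2_on_Qf: "pdiff2_on \<Omega> (Qf u)"
  unfolding Qf_def[abs_def]
  by (intro pdiff2_intros pdiff2_on_pd1 add_pos_nonneg sum_nonneg) auto

lemma pd_Qf:
  assumes y: "y \<in> \<Omega>"
  shows "pd i (Qf u) y = (\<Sum>a\<in>UNIV. pd a u y * pd i (pd a u) y) / Qf u y"
proof -
  have pos: "0 < 1 + (\<Sum>a\<in>UNIV. (pd a u z)\<^sup>2)" for z
    by (intro add_pos_nonneg sum_nonneg) auto
  have "pd i (Qf u) y = pd i (\<lambda>z. 1 + (\<Sum>a\<in>UNIV. (pd a u z)\<^sup>2)) y / (2 * Qf u y)"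
    unfolding Qf_def[abs_def] using y pos by (intro pd_sqrt[where S=\<Omega>] pdiff_intros) auto
  also have "pd i (\<lambda>z. 1 + (\<Sum>a\<in>UNIV. (pd a u z)\<^sup>2)) y = 2 * (\<Sum>a\<in>UNIV. pd a u y * pd i (pd a u) y)"
    using y by (simp add: pd_rules_on pdiff_intros sum_distrib_left mult_ac)
  finally show ?thesis
    by simp
qed

lemma Hf_eq: "y \<in> \<Omega> \<Longrightarrow> Hf u y = lap u y / Qf u y - hess_grad_grad u y / Qf u y ^ 3"
  unfolding Hf_def lap_def hess_grad_grad_def
  using pdiff2_on_imp_pdiff_on[OF pdiff2_on_Qf]
  by (simp add: pd_rules_on pdiff_intros pd_Qf Qf_nonzero sum_2
      field_simps power2_eq_square power3_eq_cube)

lemma pdiff2_on_lap: "pdiff2_on \<Omega> (lap u)"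
  unfolding lap_def[abs_def] by (intro pdiff2_intros pdiff2_on_pd2) simp

lemma pdiff2_on_hess_grad_grad: "pdiff2_on \<Omega> (hess_grad_grad u)"
  unfolding hess_grad_grad_def[abs_def] by (intro pdiff2_intros pdiff2_on_pd1 pdiff2_on_pd2) simp_all

lemma pdiff2_on_Hf: "pdiff2_on \<Omega> (Hf u)"
proof (rule pdiff2_on_cong[OF open_domain Hf_eq])
  show "pdiff2_on \<Omega> (\<lambda>y. lap u y / Qf u y - hess_grad_grad u y / Qf u y ^ 3)"
    by (intro pdiff2_intros pdiff2_on_lap pdiff2_on_Qf pdiff2_on_hess_grad_grad) (simp_all add: Qf_nonzero)
qed

lemma pdiff2_on_willmore_matrix: "pdiff2_on \<Omega> (willmore_matrix u i l)"
  unfolding willmore_matrix_def[abs_def] using Qf_nonzero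
  by (intro pdiff2_intros pdiff2_on_Qf pdiff2_on_pd1) auto

lemma pdiff2_on_b2_unexpanded: "pdiff2_on \<Omega> (b2_unexpanded u i m)"
  unfolding b2_unexpanded_def[abs_def]
  by (intro pdiff2_intros pdiff2_on_lap pdiff2_on_willmore_matrix pdiff2_on_Qf pdiff2_on_Hf)

lemma willmore_field_eq:
  assumes y: "y \<in> \<Omega>"
  shows "(\<Sum>l\<in>UNIV. willmore_matrix u i l y * pd l (\<lambda>z. Qf u z * Hf u z) y)
           - (Hf u y)\<^sup>2 / (2 * Qf u y) * pd i u y
         = pd i (lap u) y - b1_unexpanded u i y - (\<Sum>m\<in>UNIV. pd m (b2_unexpanded u i m) y)"
proof -
  have pdiff: "pdiff_on \<Omega> (lap u)" "pdiff_on \<Omega> (willmore_matrix u i m)" "pdiff_on \<Omega> (\<lambda>z. Qf u z * Hf u z)"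
    for m
    by (intro pdiff2_on_imp_pdiff_on pdiff2_intros pdiff2_on_lap pdiff2_on_willmore_matrix
        pdiff2_on_Qf pdiff2_on_Hf)+
  have "pd m (b2_unexpanded u i m) y = (if i = m then pd m (lap u) y else 0)
          - (pd m (willmore_matrix u i m) y * (Qf u y * Hf u y)
             + willmore_matrix u i m y * pd m (\<lambda>z. Qf u z * Hf u z) y)" for m
    unfolding b2_unexpanded_def[abs_def] using y pdiff by (simp add: pd_rules_on pdiff_intros)
  then have "(\<Sum>m\<in>UNIV. pd m (b2_unexpanded u i m) y) = pd i (lap u) y
      - (\<Sum>m\<in>UNIV. pd m (willmore_matrix u i m) y) * (Qf u y * Hf u y)
      - (\<Sum>m\<in>UNIV. willmore_matrix u i m y * pd m (\<lambda>z. Qf u z * Hf u z) y)"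
    by (simp add: sum.distrib sum_subtractf sum_distrib_right)
  then show ?thesis
    by (simp add: b1_unexpanded_def)
qed

lemma b2_unexpanded_eq_b2:
  assumes y: "y \<in> \<Omega>"
  shows "b2_unexpanded u i m y = b2 willmore_T2 willmore_T3 u y i m"
proof -
  have grad: "(\<Sum>a\<in>UNIV. (pd a u y)\<^sup>2) = (Qf u y)\<^sup>2 - 1"
    by (simp add: Qf_squared)
  have nonzero: "Qf u y \<noteq> 0" "1 + Qf u y \<noteq> 0"
    using Qf_pos[of u y] by simp_all
  note defs = b2_unexpanded_def willmore_matrix_def b2_willmore_T2_T3 Hf_eq[OF y]
  show ?thesis
  proof (cases "i = m")
    case True
    show ?thesis
      unfolding defs by (simp add: True grad nonzero divide_simps; algebra)
  next
    case False
    show ?thesis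
      unfolding defs by (simp add: False nonzero divide_simps; algebra)
  qed
qed

lemma div_willmore_matrix:
  assumes y: "y \<in> \<Omega>"
  shows "(\<Sum>m\<in>UNIV. pd m (willmore_matrix u i m) y)
    = - ((\<Sum>k\<in>UNIV. pd k u y * (pd i (pd k u) y + pd k (pd i u) y)) + pd i u y * lap u y) / Qf u y ^ 3
      + 3 * pd i u y * hess_grad_grad u y / Qf u y ^ 5"
  unfolding willmore_matrix_def[abs_def] lap_def hess_grad_grad_def
  using y pdiff2_on_imp_pdiff_on[OF pdiff2_on_Qf]
  by (induction i rule: index_2_induct)
    (simp add: pd_rules_on pdiff_intros pd_Qf Qf_nonzero sum_2 divide_simps; algebra)+

lemma b1_unexpanded_eq_b1:
  assumes y: "y \<in> \<Omega>"
  shows "b1_unexpanded u i y = b1 willmore_T1 u y i"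
  unfolding b1_unexpanded_def div_willmore_matrix[OF y] Hf_eq[OF y] b1_willmore_T1
  by (simp add: Qf_nonzero divide_simps; algebra)

lemma pdiff_on_b1_unexpanded: "pdiff_on \<Omega> (b1_unexpanded u i)"
  unfolding b1_unexpanded_def[abs_def]
  by (intro pdiff_intros pdiff2_on_imp_pdiff_on pdiff2_on_imp_pdiff_on_pd pdiff2_on_willmore_matrix
      pdiff2_on_Qf pdiff2_on_Hf) (simp_all add: Qf_nonzero)

lemma pd_pd_lap:
  assumes x: "x \<in> \<Omega>"
  shows "pd i (pd i (lap u)) x = (\<Sum>j\<in>UNIV. pd i (pd i (pd j (pd j u))) x)"
proof -
  have "pd i (pd i (lap u)) x = pd i (\<lambda>z. \<Sum>j\<in>UNIV. pd i (pd j (pd j u)) z) x"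
    by (rule pd_cong[OF open_domain x]) (simp add: lap_def[abs_def] pd_rules_on pdiff_intros)
  also have "\<dots> = (\<Sum>j\<in>UNIV. pd i (pd i (pd j (pd j u))) x)"
    using x by (simp add: pd_rules_on pdiff_intros)
  finally show ?thesis .
qed

lemma willmore_lhs_eq:
  assumes x: "x \<in> \<Omega>"
  shows "willmore_lhs u x = bilap u x - (\<Sum>i\<in>UNIV. pd i (\<lambda>y. b1 willmore_T1 u y i) x)
           - (\<Sum>i\<in>UNIV. \<Sum>j\<in>UNIV. pd i (pd j (\<lambda>y. b2 willmore_T2 willmore_T3 u y i j)) x)"
proof -
  have "willmore_lhs u x = (\<Sum>i\<in>UNIV. pd i (\<lambda>y. pd i (lap u) y - b1_unexpanded u i y
          - (\<Sum>m\<in>UNIV. pd m (b2_unexpanded u i m) y)) x)"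
    unfolding willmore_lhs_def willmore_matrix_def[symmetric]
    by (intro sum.cong refl pd_cong[OF open_domain x] willmore_field_eq)
  also have "\<dots> = (\<Sum>i\<in>UNIV. pd i (pd i (lap u)) x - pd i (b1_unexpanded u i) x
          - (\<Sum>m\<in>UNIV. pd i (pd m (b2_unexpanded u i m)) x))"
    using x pdiff_on_b1_unexpanded pdiff2_on_imp_pdiff_on_pd[OF pdiff2_on_lap]
      pdiff2_on_imp_pdiff_on_pd[OF pdiff2_on_b2_unexpanded]
    by (simp add: pd_rules_on pdiff_intros)
  also have "\<dots> = bilap u x - (\<Sum>i\<in>UNIV. pd i (\<lambda>y. b1 willmore_T1 u y i) x)
          - (\<Sum>i\<in>UNIV. \<Sum>j\<in>UNIV. pd i (pd j (\<lambda>y. b2 willmore_T2 willmore_T3 u y i j)) x)"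
  proof -
    have "pd i (b1_unexpanded u i) x = pd i (\<lambda>y. b1 willmore_T1 u y i) x" for i
      by (rule pd_cong[OF open_domain x b1_unexpanded_eq_b1])
    moreover have "pd i (pd m (b2_unexpanded u i m)) x = pd i (pd m (\<lambda>y. b2 willmore_T2 willmore_T3 u y i m)) x"
      for i m
      by (intro pd_cong[OF open_domain x] pd_cong[OF open_domain] b2_unexpanded_eq_b2)
    ultimately show ?thesis
      using x by (simp add: bilap_def pd_pd_lap sum_subtractf)
  qed
  finally show ?thesis .
qed

end

lemma Ck4_imp_pdiff4_on:
  assumes "open \<Omega>" "Ck 4 \<Omega> u"
  shows "pdiff4_on \<Omega> u"
proof -
  have "Ck (Suc (Suc (Suc (Suc 0)))) \<Omega> u"
    using assms(2) by (simp add: numeral_eq_Suc)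
  then show ?thesis
    using assms(1) by unfold_locales (simp_all add: pdiff_on_def)
qed

theorem lemma1:
  shows "\<exists>T1 T2 T3.
     (\<forall>k\<in>{1,2,3::nat}. contraction_tensor (2*k + 4) (T1 k)) \<and>
     (\<forall>k\<in>{1,2::nat}. contraction_tensor (2*k + 4) (T2 k)) \<and>
     contraction_tensor 6 T3 \<and>
     (\<forall>(\<Omega>::(real^2) set) (u::real^2 \<Rightarrow> real). open \<Omega> \<longrightarrow> Ck 4 \<Omega> u \<longrightarrow>
        (\<forall>x\<in>\<Omega>. willmore_lhs u x =
            bilap u x
            - (\<Sum>i\<in>UNIV. pd i (\<lambda>y. b1 T1 u y i) x)
            - (\<Sum>i\<in>UNIV. \<Sum>j\<in>UNIV. pd i (pd j (\<lambda>y. b2 T2 T3 u y i j)) x)))"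
  using contraction_tensor_willmore pdiff4_on.willmore_lhs_eq[OF Ck4_imp_pdiff4_on] by blast

end
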